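(* Let $0<L,W<\infty$, $\tau=iW/L$, $N\in\mathbb{N}$ (with $N\ge2$ when $R_N=D_N$), and $R_N\in\{A_{N-1},B_N,B_N^\vee,C_N,C_N^\vee,BC_N,D_N\}$. For $j,k\in\{1,\dots,N\}$, $$\int_0^Ldx\int_0^Wdy\,\exp\Big(-\frac{2\pi\mathcal{N}}{LW}y^2\Big)\overline{M^{R_N}_j(x+iy)}\,M^{R_N}_k(x+iy)=h^{R_N}_j\delta_{jk},$$ where, writing $e_j=e^{-2\tau\pi iJ(j)^2/\mathcal{N}}$ and $c=LW/\sqrt{2\mathcal{N}\Im\tau}$: $h^{A_{N-1}}_j=c\,e_j$ for all $j$; $h^{R_N}_j=2c\,e_j$ for all $j$ when $R_N=C_N,C_N^\vee,BC_N$; for $R_N=B_N,B_N^\vee$, $h_1=4c\,e_1$ and $h_j=2c\,e_j$ for $j\ge2$; for $R_N=D_N$, $h_j=4c\,e_j$ for $j\in\{1,N\}$ and $h_j=2c\,e_j$ for $j\in\{2,\dots,N-1\}$.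
   Context: Jacobi theta functions ($\Im\tau>0$, $q_0=e^{\pi i\tau}$): $\vartheta_1(v;\tau)=i\sum_{n\in\mathbb{Z}}(-1)^nq_0^{(n-1/2)^2}e^{(2n-1)\pi iv}$, $\vartheta_2(v;\tau)=\sum_{n\in\mathbb{Z}}q_0^{(n-1/2)^2}e^{(2n-1)\pi iv}$. $\mathcal{N}=\mathcal{N}^{R_N}$: $N$ for $A_{N-1}$; $2N-1$ for $B_N$; $2N$ for $B_N^\vee,C_N^\vee$; $2(N+1)$ for $C_N$; $2N+1$ for $BC_N$; $2(N-1)$ for $D_N$. $J(j)=J^{R_N}(j)$: $j-1/2$ for $A_{N-1},C_N^\vee$; $j-1$ for $B_N,B_N^\vee,D_N$; $j$ for $C_N,BC_N$. The functions $M_j=M^{R_N}_j$, $z\in\mathbb{C}$: for $A_{N-1}$, $M_j(z)=e^{2\pi iJ(j)z/L}\vartheta_2(J(j)\tau+\mathcal{N}z/L;\mathcal{N}\tau)$; for $B_N,B_N^\vee$, $M_j(z)=e^{2\pi iJ(j)z/L}\vartheta_1(J(j)\tau+\mathcal{N}z/L;\mathcal{N}\tau)-e^{-2\pi iJ(j)z/L}\vartheta_1(J(j)\tau-\mathcal{N}z/L;\mathcal{N}\tau)$; for $C_N,C_N^\vee,BC_N$, the same expression with $\vartheta_2$ in place of $\vartheta_1$; for $D_N$, $M_j(z)=e^{2\pi iJ(j)z/L}\vartheta_2(J(j)\tau+\mathcal{N}z/L;\mathcal{N}\tau)+e^{-2\pi iJ(j)z/L}\vartheta_2(J(j)\tau-\mathcal{N}z/L;\mathcal{N}\tau)$.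 *)

theory Defs
  imports "HOL-Analysis.Analysis"
begin

definition theta1 :: "complex \<Rightarrow> complex \<Rightarrow> complex" where
  "theta1 v tau = \<i> * (\<Sum>\<^sub>\<infinity>n::int. ((-1::complex) powi n)
      * exp (pi * \<i> * tau * (of_int n - 1/2)^2) * exp ((2 * of_int n - 1) * pi * \<i> * v))"

definition theta2 :: "complex \<Rightarrow> complex \<Rightarrow> complex" where
  "theta2 v tau = (\<Sum>\<^sub>\<infinity>n::int.
      exp (pi * \<i> * tau * (of_int n - 1/2)^2) * exp ((2 * of_int n - 1) * pi * \<i> * v))"

datatype rootsys = A | B | Bv | C | Cv | BC | D
  \<comment> \<open>A stands for A_{N-1}; Bv, Cv for the dual systems B_N^vee, C_N^vee.\<close>

fun calN :: "rootsys \<Rightarrow> nat \<Rightarrow> real" where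
  "calN A N = real N"
| "calN B N = 2 * real N - 1"
| "calN Bv N = 2 * real N"
| "calN Cv N = 2 * real N"
| "calN C N = 2 * (real N + 1)"
| "calN BC N = 2 * real N + 1"
| "calN D N = 2 * (real N - 1)"

fun Jfun :: "rootsys \<Rightarrow> nat \<Rightarrow> real" where
  "Jfun A j = real j - 1/2"
| "Jfun Cv j = real j - 1/2"
| "Jfun B j = real j - 1"
| "Jfun Bv j = real j - 1"
| "Jfun D j = real j - 1"
| "Jfun C j = real j"
| "Jfun BC j = real j"

definition Mfun :: "rootsys \<Rightarrow> nat \<Rightarrow> real \<Rightarrow> complex \<Rightarrow> nat \<Rightarrow> complex \<Rightarrow> complex" where
  "Mfun R N L tau j z =
    (let Jc = complex_of_real (Jfun R j);
         Nc = complex_of_real (calN R N);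
         Lc = complex_of_real L;
         th = (if R = B \<or> R = Bv then theta1 else theta2);
         plus = exp (2 * pi * \<i> * Jc * z / Lc) * th (Jc * tau + Nc * z / Lc) (Nc * tau);
         minus = exp (- 2 * pi * \<i> * Jc * z / Lc) * th (Jc * tau - Nc * z / Lc) (Nc * tau)
     in (if R = A then plus else if R = D then plus + minus else plus - minus))"

definition hconst :: "rootsys \<Rightarrow> nat \<Rightarrow> real \<Rightarrow> real \<Rightarrow> complex \<Rightarrow> nat \<Rightarrow> complex" where
  "hconst R N L W tau j =
    (let e = exp (- 2 * tau * pi * \<i> * (Jfun R j)^2 / calN R N);
         c = L * W / sqrt (2 * calN R N * Im tau);
         m = (if R = A then 1
              else if R = B \<or> R = Bv then (if j = 1 then 4 else 2)
              else if R = D then (if j = 1 \<or> j = N then 4 else 2)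
              else 2)
     in of_real (m * c) * e)"

end

theory Submission
  imports Defs "HOL-Probability.Distributions"
begin

(*
  Write K for calN. Up to the factor exp (pi W J^2 / (L K)), each M_j is theta_a + s * theta_(-a) with
  a = J - K/2, where theta_a z = sum_n eps_n * g_(a + K n) z is a lattice sum of Gaussian beams
  g_mu z = exp (- pi W mu^2 / (L K) + 2 pi i mu z / L).  On the strip, w y * cnj (g_mu) * g_nu is a
  positive function of y times exp (2 pi i (nu - mu) x / L); all frequencies involved differ by
  integers, so the x-integral over [0, L] keeps only the pairs with mu = nu.  For these, completing
  the square turns w y * |g_mu|^2 into the shifted weight w (y + W mu / K), and as mu runs through
  a + K Z the shifted windows tile the real line, so the y-integrals add up to the Gaussian integral
  sqrt (L W / (2 K)).  The pairings theta_a with theta_b and theta_(-a) with theta_(-b) therefore give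
  the diagonal value; the cross terms survive only when 2a is a multiple of K, i.e. for J = 0 (j = 1
  in types B, B^vee, D) and J = K/2 (j = N in type D), with a sign read off from eps.
*)

section \<open>Unordered sums and termwise integration\<close>

lemma summable_on_exp_neg_abs_int: "(\<lambda>n::int. exp (- \<bar>real_of_int n\<bar>)) summable_on UNIV"
proof -
  have "summable (\<lambda>n::nat. exp (- 1 :: real) ^ n)"
    using summable_geometric[of "exp (- 1) :: real"] by simp
  then have nat: "(\<lambda>n::nat. exp (- real n)) summable_on UNIV"
    by (intro summable_nonneg_imp_summable_on) (simp_all add: exp_of_nat_mult[symmetric])
  have "(\<lambda>n::int. exp (- \<bar>real_of_int n\<bar>)) summable_on range int"
    using nat by (simp add: summable_on_reindex o_def)
  moreover have "(\<lambda>n::int. exp (- \<bar>real_of_int n\<bar>)) summable_on range (\<lambda>n::nat. - int n)"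
    using nat by (simp add: summable_on_reindex inj_on_def o_def)
  moreover have "UNIV = range int \<union> range (\<lambda>n::nat. - int n)"
  proof -
    have "m \<in> range int \<union> range (\<lambda>n::nat. - int n)" for m :: int
    proof (cases "0 \<le> m")
      case True
      then have "m = int (nat m)" by simp
      then show ?thesis by blast
    next
      case False
      then have "m = - int (nat (- m))" by simp
      then show ?thesis by blast
    qed
    then show ?thesis by blast
  qed
  ultimately show ?thesis
    by (metis summable_on_union)
qed

lemma exp_quadratic_le_exp_linear:
  fixes \<alpha> \<beta> \<gamma> t :: real
  assumes "\<alpha> > 0"
  shows "exp (- \<alpha> * t\<^sup>2 + \<beta> * \<bar>t\<bar>) \<le> exp ((\<bar>\<beta>\<bar> + \<gamma>)\<^sup>2 / (4 * \<alpha>)) * exp (- \<gamma> * \<bar>t\<bar>)"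
proof -
  have "0 \<le> \<alpha> * (\<bar>t\<bar> - (\<bar>\<beta>\<bar> + \<gamma>) / (2 * \<alpha>))\<^sup>2"
    using assms by simp
  also have "\<dots> = \<alpha> * t\<^sup>2 - (\<bar>\<beta>\<bar> + \<gamma>) * \<bar>t\<bar> + (\<bar>\<beta>\<bar> + \<gamma>)\<^sup>2 / (4 * \<alpha>)"
    using assms by (simp add: power2_eq_square field_simps)
  moreover have "\<beta> * \<bar>t\<bar> \<le> \<bar>\<beta>\<bar> * \<bar>t\<bar>"
    by (simp add: mult_right_mono)
  ultimately have "- \<alpha> * t\<^sup>2 + \<beta> * \<bar>t\<bar> \<le> (\<bar>\<beta>\<bar> + \<gamma>)\<^sup>2 / (4 * \<alpha>) + - \<gamma> * \<bar>t\<bar>"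
    by (simp add: distrib_right)
  then show ?thesis
    by (simp only: exp_le_cancel_iff flip: exp_add)
qed

lemma summable_on_exp_quadratic_int:
  fixes \<alpha> \<beta> a K :: real
  assumes "\<alpha> > 0" "K > 0"
  shows "(\<lambda>n::int. exp (- \<alpha> * (a + K * n)\<^sup>2 + \<beta> * \<bar>a + K * n\<bar>)) summable_on UNIV"
proof (rule summable_on_comparison_test)
  define C where "C = exp ((\<bar>\<beta>\<bar> + 1 / K)\<^sup>2 / (4 * \<alpha>)) * exp (\<bar>a\<bar> / K)"
  show "(\<lambda>n::int. C * exp (- \<bar>real_of_int n\<bar>)) summable_on UNIV"
    by (rule summable_on_cmult_right[OF summable_on_exp_neg_abs_int])
  fix n :: int
  have "K * \<bar>real_of_int n\<bar> = \<bar>(a + K * n) - a\<bar>"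
    using assms(2) by (simp add: abs_mult)
  also have "\<dots> \<le> \<bar>a + K * n\<bar> + \<bar>a\<bar>"
    by (rule abs_triangle_ineq4)
  finally have "- (1 / K) * \<bar>a + K * n\<bar> \<le> \<bar>a\<bar> / K - \<bar>real_of_int n\<bar>"
    using assms(2) by (simp add: field_simps)
  then have "exp (- (1 / K) * \<bar>a + K * n\<bar>) \<le> exp (\<bar>a\<bar> / K) * exp (- \<bar>real_of_int n\<bar>)"
    by (simp only: exp_le_cancel_iff diff_conv_add_uminus flip: exp_add)
  then show "exp (- \<alpha> * (a + K * n)\<^sup>2 + \<beta> * \<bar>a + K * n\<bar>) \<le> C * exp (- \<bar>real_of_int n\<bar>)"
    using order_trans[OF exp_quadratic_le_exp_linear[OF assms(1)] mult_left_mono]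
    unfolding C_def mult.assoc by fastforce
qed simp

lemma summable_on_product:
  fixes f g :: "'a \<Rightarrow> real"
  assumes "f summable_on UNIV" "g summable_on UNIV" "\<And>x. f x \<ge> 0" "\<And>y. g y \<ge> 0"
  shows "(\<lambda>p. f (fst p) * g (snd p)) summable_on UNIV"
proof -
  have "(\<lambda>p. f (fst p) * g (snd p)) summable_on Sigma UNIV (\<lambda>_. UNIV)"
  proof (rule summable_on_SigmaI)
    show "((\<lambda>y. f (fst (x, y)) * g (snd (x, y))) has_sum f x * infsum g UNIV) UNIV" for x
      using has_sum_cmult_right[OF has_sum_infsum[OF assms(2)]] by simp
  qed (use assms in \<open>auto intro: summable_on_cmult_left\<close>)
  then show ?thesis by simp
qed

lemma infsum_mult_infsum:
  fixes f g :: "'a \<Rightarrow> 'b::{real_normed_field, banach, second_countable_topology}"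
  assumes "(\<lambda>p. f (fst p) * g (snd p)) summable_on UNIV"
  shows "infsum f UNIV * infsum g UNIV = (\<Sum>\<^sub>\<infinity>p. f (fst p) * g (snd p))"
proof -
  have "(\<Sum>\<^sub>\<infinity>x. \<Sum>\<^sub>\<infinity>y. f x * g y) = (\<Sum>\<^sub>\<infinity>p. f (fst p) * g (snd p))"
    using infsum_Sigma_banach[of "\<lambda>p. f (fst p) * g (snd p)" UNIV "\<lambda>_. UNIV"] assms by simp
  moreover have "(\<Sum>\<^sub>\<infinity>x. \<Sum>\<^sub>\<infinity>y. f x * g y) = infsum f UNIV * infsum g UNIV"
    by (simp add: infsum_cmult_right' infsum_cmult_left')
  ultimately show ?thesis by simp
qed

lemma filterlim_symmetric_int_intervals:
  "filterlim (\<lambda>N::nat. {- int N..<int N}) (finite_subsets_at_top UNIV) sequentially"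
  unfolding filterlim_finite_subsets_at_top
proof (safe, goal_cases)
  case (1 X)
  define n where "n = nat (Max (insert 0 (abs ` X))) + 1"
  have sub: "X \<subseteq> {- int N..<int N}" if "n \<le> N" for N
  proof
    fix m
    assume "m \<in> X"
    then have "\<bar>m\<bar> \<le> Max (insert 0 (abs ` X))"
      using 1 by (intro Max_ge) auto
    then show "m \<in> {- int N..<int N}"
      using that unfolding n_def by auto
  qed
  show ?case
  proof (rule eventually_sequentiallyI)
    fix N
    assume "n \<le> N"
    then show "finite {- int N..<int N} \<and> X \<subseteq> {- int N..<int N} \<and> {- int N..<int N} \<subseteq> UNIV"
      using sub by blast
  qed
qed

lemma has_sum_nonneg_int_symmetric:
  fixes g :: "int \<Rightarrow> real"
  assumes nonneg: "\<And>n. 0 \<le> g n"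
    and lim: "(\<lambda>N::nat. \<Sum>n\<in>{- int N..<int N}. g n) \<longlonglongrightarrow> S"
  shows "(g has_sum S) UNIV"
proof -
  have "incseq (\<lambda>N::nat. \<Sum>n\<in>{- int N..<int N}. g n)"
    unfolding incseq_def by (auto intro!: sum_mono2 nonneg)
  then have partial_le: "(\<Sum>n\<in>{- int N..<int N}. g n) \<le> S" for N
    using lim by (rule incseq_le)
  have "sum g F \<le> S" if "finite F" for F
  proof -
    have "\<forall>\<^sub>F N in sequentially. F \<subseteq> {- int N..<int N}"
      using filterlim_symmetric_int_intervals that
      unfolding filterlim_finite_subsets_at_top by auto
    then obtain N where "F \<subseteq> {- int N..<int N}"
      by (meson eventually_sequentially order_refl)
    then have "sum g F \<le> (\<Sum>n\<in>{- int N..<int N}. g n)"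
      by (intro sum_mono2 nonneg) auto
    then show ?thesis
      using partial_le[of N] by linarith
  qed
  then have "g summable_on UNIV"
    using nonneg by (intro nonneg_bdd_above_summable_on bdd_aboveI2[where M=S]) auto
  then have "(sum g \<longlongrightarrow> infsum g UNIV) (finite_subsets_at_top UNIV)"
    using has_sum_def has_sum_infsum by blast
  then have "(\<lambda>N::nat. \<Sum>n\<in>{- int N..<int N}. g n) \<longlonglongrightarrow> infsum g UNIV"
    using filterlim_compose filterlim_symmetric_int_intervals by blast
  then have "infsum g UNIV = S"
    using lim LIMSEQ_unique by blast
  then show ?thesis
    using \<open>g summable_on UNIV\<close> has_sum_infsum by blast
qed

lemma Weierstrass_m_test_infsum:
  fixes f :: "'i \<Rightarrow> 'a \<Rightarrow> 'b::banach" and B :: "'i \<Rightarrow> real"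
  assumes B: "B summable_on UNIV" and bound: "\<And>i x. x \<in> S \<Longrightarrow> norm (f i x) \<le> B i"
  shows "uniform_limit S (\<lambda>F x. \<Sum>i\<in>F. f i x) (\<lambda>x. \<Sum>\<^sub>\<infinity>i. f i x) (finite_subsets_at_top UNIV)"
  unfolding uniform_limit_iff
proof (intro allI impI)
  fix e :: real
  assume "e > 0"
  have "(sum B \<longlongrightarrow> infsum B UNIV) (finite_subsets_at_top UNIV)"
    using has_sum_infsum[OF B] by (simp add: has_sum_def)
  then have "\<forall>\<^sub>F F in finite_subsets_at_top UNIV. dist (sum B F) (infsum B UNIV) < e"
    using \<open>e > 0\<close> tendstoD by blast
  then obtain F0 where "finite F0"
    and F0: "\<And>F. finite F \<and> F0 \<subseteq> F \<and> F \<subseteq> UNIV \<Longrightarrow> dist (sum B F) (infsum B UNIV) < e"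
    unfolding eventually_finite_subsets_at_top by meson
  show "\<forall>\<^sub>F F in finite_subsets_at_top UNIV. \<forall>x\<in>S. dist (\<Sum>i\<in>F. f i x) (\<Sum>\<^sub>\<infinity>i. f i x) < e"
    unfolding eventually_finite_subsets_at_top
  proof (intro exI[of _ F0] conjI allI impI ballI)
    fix F x
    assume F: "finite F \<and> F0 \<subseteq> F \<and> F \<subseteq> UNIV" and x: "x \<in> S"
    have "(\<lambda>i. f i x) abs_summable_on UNIV"
      by (rule Infinite_Sum.abs_summable_on_comparison_test'[OF B]) (simp add: bound[OF x])
    then have fx: "(\<lambda>i. f i x) summable_on UNIV"
      by (rule abs_summable_summable)
    have fx': "(\<lambda>i. f i x) summable_on (- F)"
      by (rule summable_on_subset_banach[OF fx]) simp
    have B': "B summable_on (- F)"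
      by (rule summable_on_subset_banach[OF B]) simp
    have "B i \<ge> 0" for i
      using bound[OF x, of i] norm_ge_zero order_trans by blast
    then have tail: "infsum B (- F) \<ge> 0"
      by (simp add: infsum_nonneg)
    have split_f: "(\<Sum>\<^sub>\<infinity>i. f i x) = (\<Sum>i\<in>F. f i x) + (\<Sum>\<^sub>\<infinity>i\<in>- F. f i x)"
      using infsum_Un_disjoint[OF _ fx', of F] F by (simp add: Un_commute)
    have split_B: "infsum B UNIV = sum B F + infsum B (- F)"
      using infsum_Un_disjoint[OF _ B', of F] F by (simp add: Un_commute)
    have "dist (\<Sum>i\<in>F. f i x) (\<Sum>\<^sub>\<infinity>i. f i x) = norm (\<Sum>\<^sub>\<infinity>i\<in>- F. f i x)"
      unfolding split_f dist_norm by (simp add: norm_minus_commute)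
    also have "\<dots> \<le> infsum B (- F)"
      by (rule norm_infsum_le[OF has_sum_infsum[OF fx'] has_sum_infsum[OF B']]) (simp add: bound[OF x])
    also have "\<dots> = dist (sum B F) (infsum B UNIV)"
      unfolding split_B dist_real_def using tail by simp
    also have "\<dots> < e"
      using F by (rule F0)
    finally show "dist (\<Sum>i\<in>F. f i x) (\<Sum>\<^sub>\<infinity>i. f i x) < e" .
  qed (use \<open>finite F0\<close> in auto)
qed

lemma has_integral_infsum_dominated:
  fixes f :: "'i \<Rightarrow> real \<Rightarrow> 'b::banach" and B :: "'i \<Rightarrow> real"
  assumes B: "B summable_on UNIV" and bound: "\<And>i x. x \<in> {a..b} \<Longrightarrow> norm (f i x) \<le> B i"
    and cont: "\<And>i. continuous_on {a..b} (f i)" and int: "\<And>i. (f i has_integral I i) {a..b}"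
  shows "((\<lambda>x. \<Sum>\<^sub>\<infinity>i. f i x) has_integral (\<Sum>\<^sub>\<infinity>i. I i)) {a..b}"
proof -
  have "uniform_limit {a..b} (\<lambda>F x. \<Sum>i\<in>F. f i x) (\<lambda>x. \<Sum>\<^sub>\<infinity>i. f i x) (finite_subsets_at_top UNIV)"
    using B bound by (rule Weierstrass_m_test_infsum)
  moreover have "continuous_on {a..b} (\<lambda>x. \<Sum>i\<in>F. f i x)" for F
    by (intro continuous_on_sum cont)
  ultimately obtain IF J where IF: "\<And>F. ((\<lambda>x. \<Sum>i\<in>F. f i x) has_integral IF F) {a..b}"
    and J: "((\<lambda>x. \<Sum>\<^sub>\<infinity>i. f i x) has_integral J) {a..b}"
    and lim: "(IF \<longlongrightarrow> J) (finite_subsets_at_top UNIV)"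
    using uniform_limit_integral[where F="finite_subsets_at_top UNIV"] finite_subsets_at_top_neq_bot
    by blast
  have "IF F = sum I F" for F
  proof (cases "finite F")
    case True
    show ?thesis
      by (rule has_integral_unique[OF IF has_integral_sum[OF True int]])
  next
    case False
    then have "((\<lambda>x. 0) has_integral IF F) {a..b}"
      using IF[of F] by simp
    then show ?thesis
      using False has_integral_unique[OF _ has_integral_0] by simp
  qed
  then have "(I has_sum J) UNIV"
    using lim unfolding has_sum_def by presburger
  then show ?thesis
    using J by (simp add: infsumI)
qed

definition has_iterated_integral ::
    "(real \<Rightarrow> real \<Rightarrow> 'a::real_normed_vector) \<Rightarrow> 'a \<Rightarrow> real set \<Rightarrow> real set
      \<Rightarrow> bool" where
  "has_iterated_integral f I S T \<longleftrightarrow>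
     (\<forall>x\<in>S. f x integrable_on T) \<and> ((\<lambda>x. integral T (f x)) has_integral I) S"

lemma has_iterated_integral_integral:
  "has_iterated_integral f I S T \<Longrightarrow> integral S (\<lambda>x. integral T (f x)) = I"
  unfolding has_iterated_integral_def by (simp add: integral_unique)

lemma has_iterated_integral_unique:
  assumes "has_iterated_integral f I S T" and "has_iterated_integral f J S T"
  shows "I = J"
  using assms by (metis has_iterated_integral_integral)

lemma has_iterated_integral_cong:
  assumes "has_iterated_integral f I S T" and fg: "\<And>x y. x \<in> S \<Longrightarrow> y \<in> T \<Longrightarrow> f x y = g x y"
  shows "has_iterated_integral g I S T"
  unfolding has_iterated_integral_def
proof
  show "\<forall>x\<in>S. g x integrable_on T"
    using assms integrable_cong[of T "f _" "g _"] unfolding has_iterated_integral_def by blast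
  have "integral T (f x) = integral T (g x)" if "x \<in> S" for x
    using fg that by (intro Henstock_Kurzweil_Integration.integral_cong) auto
  then show "((\<lambda>x. integral T (g x)) has_integral I) S"
    using assms(1) has_integral_cong[of S "\<lambda>x. integral T (f x)" "\<lambda>x. integral T (g x)"]
    unfolding has_iterated_integral_def by blast
qed

lemma has_iterated_integral_add:
  assumes "has_iterated_integral f I S T" and "has_iterated_integral g J S T"
  shows "has_iterated_integral (\<lambda>x y. f x y + g x y) (I + J) S T"
  unfolding has_iterated_integral_def
proof
  show "\<forall>x\<in>S. (\<lambda>y. f x y + g x y) integrable_on T"
    using assms integrable_add unfolding has_iterated_integral_def by blast
  have "integral T (\<lambda>y. f x y + g x y) = integral T (f x) + integral T (g x)" if "x \<in> S" for x
    using assms that unfolding has_iterated_integral_def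
    by (intro Henstock_Kurzweil_Integration.integral_add) auto
  then show "((\<lambda>x. integral T (\<lambda>y. f x y + g x y)) has_integral I + J) S"
    using has_integral_add[of "\<lambda>x. integral T (f x)" I S "\<lambda>x. integral T (g x)" J] assms
      has_integral_cong[of S "\<lambda>x. integral T (\<lambda>y. f x y + g x y)"]
    unfolding has_iterated_integral_def by simp
qed

lemma has_iterated_integral_mult_left:
  fixes f :: "real \<Rightarrow> real \<Rightarrow> 'a::real_normed_field"
  assumes "has_iterated_integral f I S T"
  shows "has_iterated_integral (\<lambda>x y. c * f x y) (c * I) S T"
  using assms has_integral_mult_right[of "\<lambda>x. integral T (f x)" I S c]
  unfolding has_iterated_integral_def by (simp add: integrable_on_mult_right)

lemma has_iterated_integral_cnj:
  assumes "has_iterated_integral f I S T"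
  shows "has_iterated_integral (\<lambda>x y. cnj (f x y)) (cnj I) S T"
  using assms has_integral_cnj[of "\<lambda>x. integral T (f x)" I S]
  unfolding has_iterated_integral_def
  by (simp add: integrable_on_cnj_iff o_def flip: Henstock_Kurzweil_Integration.integral_cnj)

lemma has_iterated_integral_infsum_dominated:
  fixes f :: "'i \<Rightarrow> real \<Rightarrow> real \<Rightarrow> 'b::banach" and B :: "'i \<Rightarrow> real"
  assumes B: "B summable_on UNIV" and "c \<le> d"
    and bound: "\<And>i x y. x \<in> {a..b} \<Longrightarrow> y \<in> {c..d} \<Longrightarrow> norm (f i x y) \<le> B i"
    and cont_inner: "\<And>i x. x \<in> {a..b} \<Longrightarrow> continuous_on {c..d} (f i x)"
    and cont_outer: "\<And>i. continuous_on {a..b} (\<lambda>x. integral {c..d} (f i x))"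
    and iter: "\<And>i. has_iterated_integral (f i) (I i) {a..b} {c..d}"
  shows "has_iterated_integral (\<lambda>x y. \<Sum>\<^sub>\<infinity>i. f i x y) (\<Sum>\<^sub>\<infinity>i. I i) {a..b} {c..d}"
proof -
  have int: "\<And>i x. x \<in> {a..b} \<Longrightarrow> (f i x has_integral integral {c..d} (f i x)) {c..d}"
    and outer: "\<And>i. ((\<lambda>x. integral {c..d} (f i x)) has_integral I i) {a..b}"
    using iter unfolding has_iterated_integral_def by auto
  have inner: "((\<lambda>y. \<Sum>\<^sub>\<infinity>i. f i x y) has_integral (\<Sum>\<^sub>\<infinity>i. integral {c..d} (f i x))) {c..d}"
    if x: "x \<in> {a..b}" for x
    using B bound[OF x] cont_inner[OF x] int[OF x] by (rule has_integral_infsum_dominated)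
  have bound_outer: "norm (integral {c..d} (f i x)) \<le> (d - c) * B i" if x: "x \<in> {a..b}" for i x
    using integral_bound[OF \<open>c \<le> d\<close> cont_inner[OF x] bound[OF x]] by (simp add: mult.commute)
  have "((\<lambda>x. \<Sum>\<^sub>\<infinity>i. integral {c..d} (f i x)) has_integral (\<Sum>\<^sub>\<infinity>i. I i)) {a..b}"
    by (rule has_integral_infsum_dominated[OF summable_on_cmult_right[OF B] bound_outer cont_outer outer])
  moreover have "integral {c..d} (\<lambda>y. \<Sum>\<^sub>\<infinity>i. f i x y) = (\<Sum>\<^sub>\<infinity>i. integral {c..d} (f i x))"
    if "x \<in> {a..b}" for x
    using inner[OF that] by (rule integral_unique)
  ultimately have "((\<lambda>x. integral {c..d} (\<lambda>y. \<Sum>\<^sub>\<infinity>i. f i x y))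
      has_integral (\<Sum>\<^sub>\<infinity>i. I i)) {a..b}"
    by (subst has_integral_cong[where g="\<lambda>x. \<Sum>\<^sub>\<infinity>i. integral {c..d} (f i x)"]) auto
  then show ?thesis
    using inner has_integral_integrable unfolding has_iterated_integral_def by blast
qed

section \<open>Elementary integrals\<close>

lemma integral_cis_multiple:
  fixes L d :: real
  assumes L: "L > 0" and d: "d \<in> \<int>"
  shows "integral {0..L} (\<lambda>x. cis (2 * pi * d * x / L)) = (if d = 0 then of_real L else 0)"
proof (cases "d = 0")
  case True
  then show ?thesis
    using L by (simp add: scaleR_conv_of_real)
next
  case False
  define c where "c = complex_of_real (2 * pi * d / L)"
  have "c \<noteq> 0"
    using False L by (simp add: c_def)
  define F where "F x = exp (\<i> * c * complex_of_real x) / (\<i> * c)" for x :: real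
  have cis_eq: "cis (2 * pi * d * x / L) = exp (\<i> * c * complex_of_real x)" for x
    unfolding cis_conv_exp c_def by (simp add: field_simps)
  have "(F has_vector_derivative cis (2 * pi * d * x / L)) (at x within {0..L})" for x
  proof -
    have "((\<lambda>w. exp (\<i> * c * w) / (\<i> * c)) has_field_derivative exp (\<i> * c * complex_of_real x))
        (at (complex_of_real x) within complex_of_real ` {0..L})"
      using \<open>c \<noteq> 0\<close> by (auto intro!: derivative_eq_intros)
    moreover have "(complex_of_real has_vector_derivative 1) (at x within {0..L})"
      using has_derivative_of_real[OF has_derivative_ident, of "at x within {0..L}"]
      by (simp add: has_vector_derivative_def scaleR_conv_of_real)
    ultimately have "((\<lambda>x. exp (\<i> * c * complex_of_real x) / (\<i> * c)) has_vector_derivative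
        1 * exp (\<i> * c * complex_of_real x)) (at x within {0..L})"
      using field_vector_diff_chain_within[of complex_of_real 1 x "{0..L}"] by (simp add: o_def)
    then show ?thesis
      unfolding F_def cis_eq by (simp add: o_def)
  qed
  then have "((\<lambda>x. cis (2 * pi * d * x / L)) has_integral F L - F 0) {0..L}"
    using L by (intro fundamental_theorem_of_calculus) auto
  moreover have "F L = F 0"
    using cis_eq[of L] cis_multiple_2pi[OF d] L unfolding F_def by simp
  ultimately show ?thesis
    using False by (simp add: integral_unique)
qed

lemma has_integral_exp_neg_square:
  fixes c :: real
  assumes "c > 0"
  shows "((\<lambda>x. exp (- c * x\<^sup>2)) has_integral sqrt (pi / c)) UNIV"
proof -
  define \<sigma> where "\<sigma> = 1 / sqrt (2 * c)"
  have "\<sigma> > 0"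
    using assms by (simp add: \<sigma>_def)
  have \<sigma>2: "2 * \<sigma>\<^sup>2 = 1 / c"
    using assms by (simp add: \<sigma>_def power_divide)
  have "(normal_density 0 \<sigma> has_integral 1) UNIV"
    using has_integral_integral_lborel[OF integrable_normal_density[OF \<open>\<sigma> > 0\<close>, of 0]]
      integral_normal_density[OF \<open>\<sigma> > 0\<close>, of 0] by simp
  then have "((\<lambda>x. sqrt (2 * pi * \<sigma>\<^sup>2) * normal_density 0 \<sigma> x) has_integral sqrt (2 * pi * \<sigma>\<^sup>2) * 1) UNIV"
    by (rule has_integral_mult_right)
  moreover have "2 * pi * \<sigma>\<^sup>2 = pi / c"
    using \<sigma>2 by (metis mult.assoc mult.commute times_divide_eq_right mult_1_right)
  moreover have "sqrt (pi / c) * normal_density 0 \<sigma> x = exp (- c * x\<^sup>2)" for x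
  proof -
    have "- (x - 0)\<^sup>2 / (2 * \<sigma>\<^sup>2) = - c * x\<^sup>2"
      unfolding \<sigma>2 by simp
    moreover have "sqrt (pi / c) > 0"
      using assms by simp
    ultimately show ?thesis
      using assms unfolding normal_density_def \<open>2 * pi * \<sigma>\<^sup>2 = pi / c\<close> by simp
  qed
  ultimately show ?thesis
    by simp
qed

lemma sum_integral_tiles:
  fixes f :: "real \<Rightarrow> real" and t h :: real
  assumes "f integrable_on UNIV" and "h \<ge> 0"
  shows "(\<Sum>n\<in>{- int N..<int N}. integral {t + n * h .. t + n * h + h} f)
    = integral {t - N * h .. t + N * h} f"
proof (induction N)
  case (Suc N)
  have combine: "integral {u..v} f + integral {v..w} f = integral {u..w} f" if "u \<le> v" "v \<le> w" for u v w
    using that assms(1) integrable_on_subinterval[of f UNIV]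
    by (intro Henstock_Kurzweil_Integration.integral_combine) auto
  have "{- int (Suc N)..<int (Suc N)} = insert (- int N - 1) (insert (int N) {- int N..<int N})"
    by auto
  then have "(\<Sum>n\<in>{- int (Suc N)..<int (Suc N)}. integral {t + n * h .. t + n * h + h} f)
      = integral {t - Suc N * h .. t - N * h} f
        + (integral {t + N * h .. t + Suc N * h} f + integral {t - N * h .. t + N * h} f)"
    using Suc.IH by (simp add: algebra_simps)
  also have "\<dots> = integral {t - Suc N * h .. t + Suc N * h} f"
    using assms(2) combine[of "t - N * h" "t + N * h" "t + Suc N * h"]
      combine[of "t - Suc N * h" "t - N * h" "t + Suc N * h"]
    by (simp add: algebra_simps)
  finally show ?case .
qed simp

lemma has_sum_integral_tiles:
  fixes f :: "real \<Rightarrow> real" and t h :: real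
  assumes int: "f integrable_on UNIV" and nonneg: "\<And>x. 0 \<le> f x" and "h > 0"
  shows "((\<lambda>n::int. integral {t + n * h .. t + n * h + h} f) has_sum integral UNIV f) UNIV"
proof (rule has_sum_nonneg_int_symmetric)
  show "0 \<le> integral {t + n * h .. t + n * h + h} f" for n
    using int nonneg by (intro integral_nonneg integrable_on_subinterval[of f UNIV]) auto
  define g where "g N x = (if x \<in> {t - real N * h .. t + real N * h} then f x else 0)" for N :: nat and x
  have "(\<lambda>N. g N x) \<longlonglongrightarrow> f x" for x
  proof (rule tendsto_eventually)
    obtain N0 :: nat where "\<bar>x - t\<bar> / h \<le> real N0"
      using real_arch_simple by blast
    then have "\<bar>x - t\<bar> \<le> real N0 * h"
      using \<open>h > 0\<close> by (simp add: divide_le_eq)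
    moreover have "real N0 * h \<le> real N * h" if "N0 \<le> N" for N
      using that \<open>h > 0\<close> by (simp add: mult_right_mono)
    ultimately have "g N x = f x" if "N0 \<le> N" for N
      using that unfolding g_def by fastforce
    then show "\<forall>\<^sub>F N in sequentially. g N x = f x"
      by (rule eventually_sequentiallyI)
  qed
  moreover have "g N integrable_on UNIV" for N
    unfolding g_def integrable_restrict_UNIV using int integrable_on_subinterval by blast
  moreover have "norm (g N x) \<le> f x" for N x
    using nonneg unfolding g_def by simp
  ultimately have "(\<lambda>N. integral UNIV (g N)) \<longlonglongrightarrow> integral UNIV f"
    using int by (intro dominated_convergence(2)) auto
  then show "(\<lambda>N. \<Sum>n\<in>{- int N..<int N}. integral {t + n * h .. t + n * h + h} f) \<longlonglongrightarrow> integral UNIV f"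
    using \<open>h > 0\<close> unfolding g_def integral_restrict_UNIV by (simp add: sum_integral_tiles[OF int])
qed

section \<open>Root-system data\<close>

(* theta1 is theta2 with the coefficients i (-1)^n; Mfun uses theta1 exactly for B and B^vee. *)
definition theta_sign :: "rootsys \<Rightarrow> int \<Rightarrow> complex" where
  "theta_sign R n = (if R = B \<or> R = Bv then \<i> * (- 1) powi n else 1)"

definition reflection_sign :: "rootsys \<Rightarrow> real" where
  "reflection_sign R = (if R = A then 0 else if R = D then 1 else - 1)"

(* The overlap of theta_a and theta_(-a) for a = J(j) - calN/2, in units of L * sqrt (L W / (2 calN));
   it can only be nonzero when 2a is a multiple of calN. *)
definition cross_sign :: "rootsys \<Rightarrow> nat \<Rightarrow> nat \<Rightarrow> real" where
  "cross_sign R N j = (if (R = B \<or> R = Bv) \<and> j = 1 then - 1 else if R = D \<and> (j = 1 \<or> j = N) then 1 else 0)"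

lemma norm_theta_sign: "norm (theta_sign R n) = 1"
  by (simp add: theta_sign_def norm_mult norm_power_int)

lemma theta_sign_uminus: "theta_sign R (- n) = theta_sign R n"
  by (simp add: theta_sign_def power_int_minus_one_minus)

lemma cnj_theta_sign_mult_shift:
  "cnj (theta_sign R n) * theta_sign R (n + r) = (if R = B \<or> R = Bv then (- 1) powi r else 1)"
proof -
  have "cnj ((- 1 :: complex) powi n) = (- 1) powi n"
    by (simp add: power_int_def)
  then have "cnj (\<i> * (- 1) powi n) * (\<i> * (- 1) powi (n + r)) = ((- 1 :: complex) powi n * (- 1) powi n) * (- 1) powi r"
    by (simp add: power_int_add mult_ac)
  then show ?thesis
    by (simp add: theta_sign_def power_int_minus_one_mult_self)
qed

lemma calN_Ints: "calN R N \<in> \<int>"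
  by (cases R) (simp_all add: Ints_diff Ints_mult Ints_add)

lemma calN_ge:
  assumes "1 \<le> N" and "R = D \<longrightarrow> 2 \<le> N"
  shows "real N \<le> calN R N"
  using assms by (cases R) auto

lemma Jfun_diff: "Jfun R j - Jfun R k = real j - real k"
  by (cases R) simp_all

lemma Jfun_add_Ints: "Jfun R j + Jfun R k \<in> \<int>"
proof -
  have "Jfun R j + Jfun R k \<in> {real j + real k - 1, real j + real k - 2, real j + real k}"
    by (cases R) simp_all
  then show ?thesis
    by (auto intro: Ints_diff Ints_add)
qed

lemma Jfun_add_cases:
  assumes "R \<noteq> A" and "R = D \<longrightarrow> 2 \<le> N" and "j \<in> {1..N}" and "k \<in> {1..N}"
  obtains (bottom) "k = j" "Jfun R j = 0" "cross_sign R N j = (if R = B \<or> R = Bv then - 1 else 1)"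
  | (top) "k = j" "Jfun R j = calN R N / 2" "cross_sign R N j = 1"
  | (interior) "0 < Jfun R j + Jfun R k" "Jfun R j + Jfun R k < calN R N" "j = k \<Longrightarrow> cross_sign R N j = 0"
proof (cases "j = 1 \<and> k = 1 \<and> R \<in> {B, Bv, D}")
  case True
  then show ?thesis
    using bottom by (auto simp: cross_sign_def)
next
  case not_bottom: False
  show ?thesis
  proof (cases "R = D \<and> j = N \<and> k = N")
    case True
    then show ?thesis
      using top assms(3) by (auto simp: cross_sign_def of_nat_diff)
  next
    case False
    then show ?thesis
      using interior not_bottom assms by (cases R) (auto simp: cross_sign_def)
  qed
qed

lemma abs_less_imp_neq_mult_of_int:
  fixes x K :: real
  assumes "0 < \<bar>x\<bar>" and "\<bar>x\<bar> < K"
  shows "x \<noteq> K * of_int r"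
proof
  assume x: "x = K * of_int r"
  have "K > 0"
    using assms by linarith
  then have "\<bar>x\<bar> = K * \<bar>of_int r\<bar>"
    using x by (simp add: abs_mult)
  moreover have "r \<noteq> 0"
    using assms x by auto
  then have "K * 1 \<le> K * \<bar>of_int r\<bar>"
    using \<open>K > 0\<close> by (intro mult_left_mono) auto
  ultimately show False
    using assms by linarith
qed

lemma hconst_eq:
  assumes "L > 0" and "W > 0" and K: "calN R N = K" and "K > 0" and tau: "tau = \<i> * complex_of_real (W / L)"
  shows "hconst R N L W tau j = complex_of_real ((1 + 2 * reflection_sign R * cross_sign R N j + (reflection_sign R)\<^sup>2)
    * (L * sqrt (L * W / (2 * K)))) * complex_of_real ((exp (pi * W * (Jfun R j)\<^sup>2 / (L * K)))\<^sup>2)"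
proof -
  have "- 2 * tau * complex_of_real pi * \<i> * complex_of_real ((Jfun R j)\<^sup>2) / complex_of_real (calN R N)
      = - 2 * (\<i> * \<i>) * (complex_of_real (W / L) * complex_of_real pi * complex_of_real ((Jfun R j)\<^sup>2)
        / complex_of_real K)"
    unfolding tau K by (simp only: mult_ac times_divide_eq_right)
  also have "\<dots> = complex_of_real (pi * W * (Jfun R j)\<^sup>2 / (L * K) + pi * W * (Jfun R j)\<^sup>2 / (L * K))"
    by (simp add: mult_ac)
  finally have e: "- 2 * tau * complex_of_real pi * \<i> * complex_of_real ((Jfun R j)\<^sup>2) / complex_of_real (calN R N)
      = complex_of_real (pi * W * (Jfun R j)\<^sup>2 / (L * K) + pi * W * (Jfun R j)\<^sup>2 / (L * K))" .
  have "L * W / (2 * K) * (2 * K * (W / L)) = W\<^sup>2"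
    using assms by (simp add: field_simps power2_eq_square)
  then have "sqrt (L * W / (2 * K)) * sqrt (2 * K * (W / L)) = W"
    using assms by (simp add: real_sqrt_mult[symmetric])
  then have c: "L * W / sqrt (2 * calN R N * Im tau) = L * sqrt (L * W / (2 * K))"
    using assms by (simp add: K tau field_simps)
  have m: "(if R = A then 1 else if R = B \<or> R = Bv then if j = 1 then 4 else 2
      else if R = D then if j = 1 \<or> j = N then 4 else 2 else 2)
    = 1 + 2 * reflection_sign R * cross_sign R N j + (reflection_sign R)\<^sup>2"
    by (simp add: reflection_sign_def cross_sign_def)
  show ?thesis
    unfolding hconst_def Let_def e c m exp_of_real exp_add by (simp add: power2_eq_square)
qed

section \<open>Gaussian beams and theta series on the strip\<close>

locale gaussian_strip =
  fixes L W K :: real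
  assumes L_pos: "0 < L" and W_pos: "0 < W" and K_pos: "0 < K"
begin

definition weight :: "real \<Rightarrow> real" where
  "weight y = exp (- 2 * pi * K / (L * W) * y\<^sup>2)"

definition gauss_mass :: real where
  "gauss_mass = sqrt (L * W / (2 * K))"

definition window_mass :: "real \<Rightarrow> real" where
  "window_mass \<mu> = integral {0..W} (\<lambda>y. weight (y + W * \<mu> / K))"

lemma weight_pos: "0 < weight y"
  by (simp add: weight_def)

lemma weight_le_one: "weight y \<le> 1"
  using L_pos W_pos K_pos by (simp add: weight_def)

lemma continuous_on_weight [continuous_intros]:
  "continuous_on S f \<Longrightarrow> continuous_on S (\<lambda>x. weight (f x))"
  unfolding weight_def by (intro continuous_intros)

lemma has_integral_weight: "(weight has_integral gauss_mass) UNIV"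
proof -
  have "0 < 2 * pi * K / (L * W)"
    using L_pos W_pos K_pos by simp
  from has_integral_exp_neg_square[OF this]
  show ?thesis
    using L_pos W_pos K_pos unfolding weight_def gauss_mass_def by (simp add: field_simps)
qed

lemma has_sum_window_mass: "((\<lambda>n::int. window_mass (a + K * n)) has_sum gauss_mass) UNIV"
proof -
  have "window_mass (a + K * n) = integral {W * a / K + n * W .. W * a / K + n * W + W} weight" for n :: int
  proof -
    have "window_mass (a + K * n) = integral {0..W} (weight \<circ> (+) (W * a / K + n * W))"
      unfolding window_mass_def using K_pos by (simp add: o_def algebra_simps add_divide_distrib)
    then show ?thesis
      by (simp add: integral_shift_Icc_real add.commute)
  qed
  moreover have "((\<lambda>n::int. integral {W * a / K + n * W .. W * a / K + n * W + W} weight) has_sum gauss_mass) UNIV"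
    using has_sum_integral_tiles[of weight W] has_integral_weight weight_pos W_pos
    by (simp add: integral_unique has_integral_integrable less_imp_le)
  ultimately show ?thesis
    by simp
qed

definition beam :: "real \<Rightarrow> complex \<Rightarrow> complex" where
  "beam \<mu> z = exp (of_real (- pi * W * \<mu>\<^sup>2 / (L * K)) + 2 * of_real pi * \<i> * of_real \<mu> * z / of_real L)"

definition beam_modulus :: "real \<Rightarrow> real \<Rightarrow> real" where
  "beam_modulus \<mu> y = exp (- pi * W * \<mu>\<^sup>2 / (L * K) - 2 * pi * \<mu> * y / L)"

definition beam_bound :: "real \<Rightarrow> real" where
  "beam_bound \<mu> = exp (- (pi * W / (L * K)) * \<mu>\<^sup>2 + (2 * pi * W / L) * \<bar>\<mu>\<bar>)"

definition pairing_integrand ::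
    "(complex \<Rightarrow> complex) \<Rightarrow> (complex \<Rightarrow> complex) \<Rightarrow> real \<Rightarrow> real \<Rightarrow> complex" where
  "pairing_integrand F G x y = of_real (weight y) * cnj (F (Complex x y)) * G (Complex x y)"

lemma beam_Complex: "beam \<mu> (Complex x y) = of_real (beam_modulus \<mu> y) * cis (2 * pi * \<mu> * x / L)"
proof -
  have "of_real (- pi * W * \<mu>\<^sup>2 / (L * K)) + 2 * of_real pi * \<i> * of_real \<mu> * Complex x y / of_real L
      = of_real (- pi * W * \<mu>\<^sup>2 / (L * K) - 2 * pi * \<mu> * y / L) + \<i> * of_real (2 * pi * \<mu> * x / L)"
    using L_pos by (simp add: complex_eq_iff Re_divide Im_divide field_simps power2_eq_square)
  then show ?thesis
    unfolding beam_def beam_modulus_def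
    by (simp only: exp_add cis_conv_exp exp_of_real)
qed

lemma beam_uminus: "beam (- \<mu>) z = beam \<mu> (- z)"
  by (simp add: beam_def)

lemma norm_beam: "norm (beam \<mu> (Complex x y)) = beam_modulus \<mu> y"
  by (simp add: beam_Complex norm_mult beam_modulus_def)

lemma beam_bound_pos: "0 < beam_bound \<mu>"
  by (simp add: beam_bound_def)

lemma beam_modulus_le_bound:
  assumes "y \<in> {0..W}"
  shows "beam_modulus \<mu> y \<le> beam_bound \<mu>"
proof -
  have "- \<mu> * y \<le> \<bar>\<mu>\<bar> * W"
    using assms mult_mono[of "- \<mu>" "\<bar>\<mu>\<bar>" y W] by auto
  then have "2 * pi * (- \<mu> * y) / L \<le> 2 * pi * (\<bar>\<mu>\<bar> * W) / L"
    using L_pos by (intro divide_right_mono mult_left_mono) auto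
  then have "- pi * W * \<mu>\<^sup>2 / (L * K) - 2 * pi * \<mu> * y / L
      \<le> - (pi * W / (L * K)) * \<mu>\<^sup>2 + (2 * pi * W / L) * \<bar>\<mu>\<bar>"
    by (simp add: field_simps)
  then show ?thesis
    unfolding beam_modulus_def beam_bound_def by simp
qed

lemma summable_on_beam_bound: "(\<lambda>n::int. beam_bound (a + K * n)) summable_on UNIV"
  unfolding beam_bound_def using L_pos W_pos K_pos by (intro summable_on_exp_quadratic_int) auto

lemma summable_on_beam_bound_product:
  "(\<lambda>p::int \<times> int. beam_bound (a + K * of_int (fst p)) * beam_bound (b + K * of_int (snd p))) summable_on UNIV"
  by (intro summable_on_product summable_on_beam_bound less_imp_le beam_bound_pos)

lemma pairing_integrand_beam:
  "pairing_integrand (beam \<mu>) (beam \<nu>) x y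
    = of_real (weight y * beam_modulus \<mu> y * beam_modulus \<nu> y) * cis (2 * pi * (\<nu> - \<mu>) * x / L)"
proof -
  have "cnj (cis (2 * pi * \<mu> * x / L)) * cis (2 * pi * \<nu> * x / L) = cis (2 * pi * (\<nu> - \<mu>) * x / L)"
    by (simp add: cis_cnj cis_mult algebra_simps diff_divide_distrib)
  then show ?thesis
    unfolding pairing_integrand_def beam_Complex by (simp add: mult_ac)
qed

lemma norm_pairing_integrand_beam_le:
  assumes "y \<in> {0..W}"
  shows "norm (pairing_integrand (beam \<mu>) (beam \<nu>) x y) \<le> beam_bound \<mu> * beam_bound \<nu>"
proof -
  have "norm (pairing_integrand (beam \<mu>) (beam \<nu>) x y) = weight y * (beam_modulus \<mu> y * beam_modulus \<nu> y)"
    unfolding pairing_integrand_beam norm_mult norm_of_real norm_cis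
    by (simp add: beam_modulus_def abs_mult abs_of_pos[OF weight_pos])
  also have "\<dots> \<le> 1 * (beam_bound \<mu> * beam_bound \<nu>)"
    by (intro mult_mono weight_le_one beam_modulus_le_bound[OF assms])
      (simp_all add: less_imp_le beam_bound_pos beam_modulus_def)
  finally show ?thesis
    by simp
qed

lemma weight_mult_beam_modulus_self: "weight y * beam_modulus \<mu> y * beam_modulus \<mu> y = weight (y + W * \<mu> / K)"
proof -
  have "- 2 * pi * K / (L * W) * y\<^sup>2 + (- pi * W * \<mu>\<^sup>2 / (L * K) - 2 * pi * \<mu> * y / L)
        + (- pi * W * \<mu>\<^sup>2 / (L * K) - 2 * pi * \<mu> * y / L)
      = - 2 * pi * K / (L * W) * (y + W * \<mu> / K)\<^sup>2"
    using L_pos W_pos K_pos by (simp add: field_simps power2_eq_square)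
  then show ?thesis
    unfolding weight_def beam_modulus_def by (simp only: exp_add[symmetric])
qed

lemma has_integral_pairing_integrand_beam:
  "(pairing_integrand (beam \<mu>) (beam \<nu>) x has_integral
      of_real (integral {0..W} (\<lambda>y. weight y * beam_modulus \<mu> y * beam_modulus \<nu> y))
      * cis (2 * pi * (\<nu> - \<mu>) * x / L)) {0..W}"
proof -
  have "continuous_on {0..W} (\<lambda>y. weight y * beam_modulus \<mu> y * beam_modulus \<nu> y)"
    unfolding beam_modulus_def using L_pos by (intro continuous_intros) auto
  from has_integral_of_real[OF integrable_integral[OF integrable_continuous_interval[OF this]]]
  show ?thesis
    unfolding pairing_integrand_beam[abs_def] by (rule has_integral_mult_left)
qed

lemma continuous_on_pairing_integrand_beam:
  "continuous_on S (pairing_integrand (beam \<mu>) (beam \<nu>) x)"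
  unfolding pairing_integrand_beam[abs_def] beam_modulus_def weight_def
  using L_pos W_pos by (intro continuous_intros) auto

lemma continuous_on_integral_pairing_integrand_beam:
  "continuous_on S (\<lambda>x. integral {0..W} (pairing_integrand (beam \<mu>) (beam \<nu>) x))"
  unfolding has_integral_pairing_integrand_beam[THEN integral_unique]
  using L_pos by (intro continuous_intros) auto

lemma has_iterated_integral_pairing_beam:
  assumes "\<nu> - \<mu> \<in> \<int>"
  shows "has_iterated_integral (pairing_integrand (beam \<mu>) (beam \<nu>))
    (if \<mu> = \<nu> then of_real (L * window_mass \<mu>) else 0) {0..L} {0..W}"
  unfolding has_iterated_integral_def
proof
  define c where "c = integral {0..W} (\<lambda>y. weight y * beam_modulus \<mu> y * beam_modulus \<nu> y)"
  note inner = has_integral_pairing_integrand_beam[of \<mu> \<nu>, folded c_def]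
  then show "\<forall>x\<in>{0..L}. pairing_integrand (beam \<mu>) (beam \<nu>) x integrable_on {0..W}"
    by blast
  have "continuous_on {0..L} (\<lambda>x. cis (2 * pi * (\<nu> - \<mu>) * x / L))"
    using L_pos by (intro continuous_intros) auto
  then have "((\<lambda>x. cis (2 * pi * (\<nu> - \<mu>) * x / L)) has_integral
      integral {0..L} (\<lambda>x. cis (2 * pi * (\<nu> - \<mu>) * x / L))) {0..L}"
    by (intro integrable_integral integrable_continuous_interval)
  then have "((\<lambda>x. cis (2 * pi * (\<nu> - \<mu>) * x / L)) has_integral (if \<mu> = \<nu> then of_real L else 0)) {0..L}"
    unfolding integral_cis_multiple[OF L_pos assms] by (simp add: eq_commute[of \<nu>])
  then have "((\<lambda>x. integral {0..W} (pairing_integrand (beam \<mu>) (beam \<nu>) x)) has_integral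
      of_real c * (if \<mu> = \<nu> then of_real L else 0)) {0..L}"
    unfolding inner[THEN integral_unique] by (rule has_integral_mult_right)
  moreover have "c = window_mass \<mu>" if "\<mu> = \<nu>"
    unfolding c_def window_mass_def that weight_mult_beam_modulus_self ..
  ultimately show "((\<lambda>x. integral {0..W} (pairing_integrand (beam \<mu>) (beam \<nu>) x)) has_integral
      (if \<mu> = \<nu> then of_real (L * window_mass \<mu>) else 0)) {0..L}"
    by (cases "\<mu> = \<nu>") (auto simp: mult.commute)
qed

definition theta_series :: "real \<Rightarrow> (int \<Rightarrow> complex) \<Rightarrow> complex \<Rightarrow> complex" where
  "theta_series a \<epsilon> z = (\<Sum>\<^sub>\<infinity>n. \<epsilon> n * beam (a + K * n) z)"

lemma theta_series_uminus: "theta_series a \<epsilon> (- z) = theta_series (- a) (\<lambda>n. \<epsilon> (- n)) z"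
proof -
  have "theta_series (- a) (\<lambda>n. \<epsilon> (- n)) z = (\<Sum>\<^sub>\<infinity>n\<in>range uminus. \<epsilon> (- n) * beam (- a + K * n) z)"
    unfolding theta_series_def by simp
  also have "\<dots> = (\<Sum>\<^sub>\<infinity>n. \<epsilon> (- (- n)) * beam (- a + K * of_int (- n)) z)"
    by (rule infsum_reindex[of uminus UNIV "\<lambda>n. \<epsilon> (- n) * beam (- a + K * of_int n) z", unfolded o_def]) simp
  also have "\<dots> = (\<Sum>\<^sub>\<infinity>n. \<epsilon> n * beam (- (a + K * n)) z)"
    by (rule infsum_cong) simp
  finally show ?thesis
    unfolding theta_series_def beam_uminus ..
qed

lemma pairing_integrand_theta_series:
  assumes \<epsilon>: "\<And>n. norm (\<epsilon> n) \<le> 1" and \<eta>: "\<And>n. norm (\<eta> n) \<le> 1" and y: "y \<in> {0..W}"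
  shows "pairing_integrand (theta_series a \<epsilon>) (theta_series b \<eta>) x y
    = (\<Sum>\<^sub>\<infinity>p. cnj (\<epsilon> (fst p)) * \<eta> (snd p)
        * pairing_integrand (beam (a + K * of_int (fst p))) (beam (b + K * of_int (snd p))) x y)"
proof -
  define f where "f n = cnj (\<epsilon> n * beam (a + K * n) (Complex x y))" for n :: int
  define g where "g m = \<eta> m * beam (b + K * m) (Complex x y)" for m :: int
  have bound: "norm (f (fst p) * g (snd p)) \<le> beam_bound (a + K * of_int (fst p)) * beam_bound (b + K * of_int (snd p))" for p
  proof -
    have "norm (f (fst p) * g (snd p)) \<le> 1 * beam_bound (a + K * of_int (fst p)) * (1 * beam_bound (b + K * of_int (snd p)))"
      unfolding f_def g_def norm_mult complex_mod_cnj norm_beam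
      by (intro mult_mono \<epsilon> \<eta> beam_modulus_le_bound[OF y])
        (simp_all add: less_imp_le beam_bound_pos beam_modulus_def)
    then show ?thesis
      by simp
  qed
  have "(\<lambda>p. f (fst p) * g (snd p)) summable_on UNIV"
    by (rule abs_summable_summable, rule Infinite_Sum.abs_summable_on_comparison_test'[OF summable_on_beam_bound_product])
      (rule bound)
  then have "pairing_integrand (theta_series a \<epsilon>) (theta_series b \<eta>) x y
      = of_real (weight y) * (\<Sum>\<^sub>\<infinity>p. f (fst p) * g (snd p))"
    unfolding pairing_integrand_def theta_series_def f_def g_def infsum_cnj[symmetric] mult.assoc
    by (rule arg_cong[OF infsum_mult_infsum])
  also have "\<dots> = (\<Sum>\<^sub>\<infinity>p. cnj (\<epsilon> (fst p)) * \<eta> (snd p)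
        * pairing_integrand (beam (a + K * of_int (fst p))) (beam (b + K * of_int (snd p))) x y)"
    unfolding infsum_cmult_right'[symmetric]
    by (rule infsum_cong) (simp add: f_def g_def pairing_integrand_def mult_ac)
  finally show ?thesis .
qed

lemma has_iterated_integral_pairing_theta_series:
  assumes "a - b \<in> \<int>" and "K \<in> \<int>"
    and \<epsilon>: "\<And>n. norm (\<epsilon> n) \<le> 1" and \<eta>: "\<And>n. norm (\<eta> n) \<le> 1"
  shows "has_iterated_integral (pairing_integrand (theta_series a \<epsilon>) (theta_series b \<eta>))
    (\<Sum>\<^sub>\<infinity>p. cnj (\<epsilon> (fst p)) * \<eta> (snd p) * (if a + K * of_int (fst p) = b + K * of_int (snd p)
       then of_real (L * window_mass (a + K * of_int (fst p))) else 0)) {0..L} {0..W}"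
proof -
  define c where "c p = cnj (\<epsilon> (fst p)) * \<eta> (snd p)" for p :: "int \<times> int"
  define T where "T p = pairing_integrand (beam (a + K * of_int (fst p))) (beam (b + K * of_int (snd p)))"
    for p :: "int \<times> int"
  have bound: "norm (c p * T p x y)
      \<le> beam_bound (a + K * of_int (fst p)) * beam_bound (b + K * of_int (snd p))" if "y \<in> {0..W}" for p x y
  proof -
    have "norm (c p * T p x y)
        \<le> (1 * 1) * (beam_bound (a + K * of_int (fst p)) * beam_bound (b + K * of_int (snd p)))"
      unfolding norm_mult complex_mod_cnj c_def T_def
      by (intro mult_mono \<epsilon> \<eta> norm_pairing_integrand_beam_le that) auto
    then show ?thesis
      by simp
  qed
  have cont_inner: "continuous_on {0..W} (\<lambda>y. c p * T p x y)" for p x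
    unfolding T_def by (intro continuous_on_mult_left continuous_on_pairing_integrand_beam)
  have cont_outer: "continuous_on {0..L} (\<lambda>x. c p * integral {0..W} (T p x))" for p
    unfolding T_def by (intro continuous_on_mult_left continuous_on_integral_pairing_integrand_beam)
  have iter: "has_iterated_integral (\<lambda>x y. c p * T p x y)
      (c p * (if a + K * of_int (fst p) = b + K * of_int (snd p)
        then of_real (L * window_mass (a + K * of_int (fst p))) else 0)) {0..L} {0..W}" for p
  proof -
    have "(b + K * of_int (snd p)) - (a + K * of_int (fst p)) = - (a - b) + K * of_int (snd p - fst p)"
      by (simp add: algebra_simps)
    also have "\<dots> \<in> \<int>"
      using assms(1,2) by (intro Ints_add Ints_minus Ints_mult Ints_of_int)
    finally show ?thesis
      unfolding T_def by (rule has_iterated_integral_mult_left[OF has_iterated_integral_pairing_beam])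
  qed
  have "has_iterated_integral (\<lambda>x y. \<Sum>\<^sub>\<infinity>p. c p * T p x y)
      (\<Sum>\<^sub>\<infinity>p. c p * (if a + K * of_int (fst p) = b + K * of_int (snd p)
        then of_real (L * window_mass (a + K * of_int (fst p))) else 0)) {0..L} {0..W}"
    using W_pos
    by (intro has_iterated_integral_infsum_dominated[OF summable_on_beam_bound_product[of a b]])
      (simp_all add: bound cont_inner cont_outer iter)
  then show ?thesis
    unfolding c_def T_def
    by (rule has_iterated_integral_cong) (simp add: pairing_integrand_theta_series \<epsilon> \<eta>)
qed

lemma has_iterated_integral_pairing_theta_series_disjoint:
  assumes "a - b \<in> \<int>" and "K \<in> \<int>"
    and "\<And>n. norm (\<epsilon> n) \<le> 1" and "\<And>n. norm (\<eta> n) \<le> 1"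
    and disjoint: "\<And>r::int. a - b \<noteq> K * r"
  shows "has_iterated_integral (pairing_integrand (theta_series a \<epsilon>) (theta_series b \<eta>)) 0 {0..L} {0..W}"
proof -
  have "a + K * of_int n \<noteq> b + K * of_int m" for n m :: int
    using disjoint[of "m - n"] by (auto simp: algebra_simps)
  then show ?thesis
    using has_iterated_integral_pairing_theta_series[OF assms(1-4)] by simp
qed

lemma has_iterated_integral_pairing_theta_series_shift:
  assumes "K \<in> \<int>" and shift: "a - b = K * of_int r"
    and "\<And>n. norm (\<epsilon> n) \<le> 1" and "\<And>n. norm (\<eta> n) \<le> 1"
    and \<kappa>: "\<And>n. cnj (\<epsilon> n) * \<eta> (n + r) = \<kappa>"
  shows "has_iterated_integral (pairing_integrand (theta_series a \<epsilon>) (theta_series b \<eta>))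
    (\<kappa> * of_real (L * gauss_mass)) {0..L} {0..W}"
proof -
  define f where "f p = cnj (\<epsilon> (fst p)) * \<eta> (snd p) * (if a + K * of_int (fst p) = b + K * of_int (snd p)
       then of_real (L * window_mass (a + K * of_int (fst p))) else (0::complex))" for p :: "int \<times> int"
  have coincide: "a + K * of_int n = b + K * of_int m \<longleftrightarrow> m = n + r" for n m :: int
  proof -
    have "a + K * of_int n = b + K * of_int m \<longleftrightarrow> K * of_int r = K * of_int (m - n)"
      using shift by (auto simp: algebra_simps)
    then show ?thesis
      using K_pos by auto
  qed
  have "a - b \<in> \<int>"
    using assms(1) unfolding shift by (intro Ints_mult Ints_of_int)
  from has_iterated_integral_pairing_theta_series[OF this assms(1,3,4)]
  have "has_iterated_integral (pairing_integrand (theta_series a \<epsilon>) (theta_series b \<eta>)) (infsum f UNIV) {0..L} {0..W}"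
    unfolding f_def .
  moreover have "infsum f UNIV = infsum f (range (\<lambda>n. (n, n + r)))"
    by (rule infsum_cong_neutral) (auto simp: f_def coincide image_iff)
  also have "\<dots> = (\<Sum>\<^sub>\<infinity>n. (\<kappa> * of_real L) * of_real (window_mass (a + K * of_int n)))"
  proof (subst infsum_reindex)
    show "infsum (f \<circ> (\<lambda>n. (n, n + r))) UNIV
        = (\<Sum>\<^sub>\<infinity>n. (\<kappa> * of_real L) * of_real (window_mass (a + K * of_int n)))"
    proof (rule infsum_cong)
      fix n
      have "a + K * of_int n = b + K * of_int (n + r)"
        using coincide[of n "n + r"] by simp
      then show "(f \<circ> (\<lambda>n. (n, n + r))) n = (\<kappa> * of_real L) * of_real (window_mass (a + K * of_int n))"
        by (simp add: f_def \<kappa>)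
    qed
  qed (simp add: inj_on_def)
  also have "\<dots> = \<kappa> * of_real (L * gauss_mass)"
    using has_sum_window_mass[of a, THEN has_sum_of_real_iff[THEN iffD2],
        THEN has_sum_cmult_right[where c = "\<kappa> * complex_of_real L"], THEN infsumI]
    by (simp add: mult_ac)
  ultimately show ?thesis
    by simp
qed

lemma has_iterated_integral_pairing_theta_series_self:
  assumes "K \<in> \<int>" and "a - b \<in> \<int>" and "\<bar>a - b\<bar> < K" and \<epsilon>: "\<And>n. norm (\<epsilon> n) = 1"
  shows "has_iterated_integral (pairing_integrand (theta_series a \<epsilon>) (theta_series b \<epsilon>))
    (if a = b then of_real (L * gauss_mass) else 0) {0..L} {0..W}"
proof (cases "a = b")
  case True
  have "cnj (\<epsilon> n) * \<epsilon> (n + 0) = 1" for n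
    using \<epsilon>[of n] by (simp add: complex_norm_square[symmetric] mult.commute)
  then show ?thesis
    using True has_iterated_integral_pairing_theta_series_shift[OF assms(1), of a b 0 \<epsilon> \<epsilon> 1] \<epsilon> by simp
next
  case False
  then show ?thesis
    using has_iterated_integral_pairing_theta_series_disjoint[OF assms(2,1)] abs_less_imp_neq_mult_of_int assms(3) \<epsilon>
    by simp
qed

lemma has_iterated_integral_pairing_combination:
  assumes "has_iterated_integral (pairing_integrand F1 G1) v11 {0..L} {0..W}"
    and "has_iterated_integral (pairing_integrand F1 G2) v12 {0..L} {0..W}"
    and "has_iterated_integral (pairing_integrand F2 G1) v21 {0..L} {0..W}"
    and "has_iterated_integral (pairing_integrand F2 G2) v22 {0..L} {0..W}"
  shows "has_iterated_integral (pairing_integrand (\<lambda>z. c * (F1 z + s * F2 z)) (\<lambda>z. d * (G1 z + t * G2 z)))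
    (cnj c * d * (v11 + t * v12 + cnj s * v21 + cnj s * t * v22)) {0..L} {0..W}"
proof -
  have "has_iterated_integral (\<lambda>x y. cnj c * d * (pairing_integrand F1 G1 x y + t * pairing_integrand F1 G2 x y
      + cnj s * pairing_integrand F2 G1 x y + cnj s * t * pairing_integrand F2 G2 x y))
    (cnj c * d * (v11 + t * v12 + cnj s * v21 + cnj s * t * v22)) {0..L} {0..W}"
    using assms by (intro has_iterated_integral_mult_left has_iterated_integral_add) auto
  then show ?thesis
    by (rule has_iterated_integral_cong) (simp add: pairing_integrand_def algebra_simps)
qed

lemma has_iterated_integral_pairing_swap:
  assumes "has_iterated_integral (pairing_integrand F G) v {0..L} {0..W}"
  shows "has_iterated_integral (pairing_integrand G F) (cnj v) {0..L} {0..W}"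
  using has_iterated_integral_cnj[OF assms]
  by (rule has_iterated_integral_cong) (simp add: pairing_integrand_def mult_ac)

lemma exp_mult_theta_term:
  fixes J :: real and n :: int
  assumes "tau = \<i> * complex_of_real (W / L)"
  shows "exp (complex_of_real (2 * pi) * \<i> * complex_of_real J * z / complex_of_real L)
     * (exp (complex_of_real pi * \<i> * (complex_of_real K * tau) * (complex_of_int n - 1/2)\<^sup>2)
       * exp (complex_of_real ((2 * real_of_int n - 1) * pi) * \<i>
           * (complex_of_real J * tau + complex_of_real K * z / complex_of_real L)))
   = complex_of_real (exp (pi * W * J\<^sup>2 / (L * K))) * beam (J - K / 2 + K * n) z"
proof -
  have "complex_of_real (2 * pi) * \<i> * complex_of_real J * z / complex_of_real L
      + (complex_of_real pi * \<i> * (complex_of_real K * tau) * (complex_of_int n - 1/2)\<^sup>2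
        + complex_of_real ((2 * real_of_int n - 1) * pi) * \<i>
          * (complex_of_real J * tau + complex_of_real K * z / complex_of_real L))
    = complex_of_real (pi * W * J\<^sup>2 / (L * K))
      + (complex_of_real (- pi * W * (J - K / 2 + K * n)\<^sup>2 / (L * K))
        + 2 * complex_of_real pi * \<i> * complex_of_real (J - K / 2 + K * n) * z / complex_of_real L)"
    unfolding assms using L_pos K_pos by (simp add: field_simps power2_eq_square)
  then show ?thesis
    unfolding beam_def exp_of_real[symmetric] exp_add[symmetric] by simp
qed

lemma exp_mult_theta_eq_theta_series:
  assumes "tau = \<i> * complex_of_real (W / L)"
  shows "exp (complex_of_real (2 * pi) * \<i> * complex_of_real J * z / complex_of_real L)
      * (if R = B \<or> R = Bv then theta1 else theta2)
          (complex_of_real J * tau + complex_of_real K * z / complex_of_real L) (complex_of_real K * tau)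
    = complex_of_real (exp (pi * W * J\<^sup>2 / (L * K))) * theta_series (J - K / 2) (theta_sign R) z"
proof -
  define t where "t n = exp (complex_of_real pi * \<i> * (complex_of_real K * tau) * (complex_of_int n - 1/2)\<^sup>2)
     * exp (complex_of_real ((2 * real_of_int n - 1) * pi) * \<i>
         * (complex_of_real J * tau + complex_of_real K * z / complex_of_real L))" for n :: int
  have "(if R = B \<or> R = Bv then theta1 else theta2)
      (complex_of_real J * tau + complex_of_real K * z / complex_of_real L) (complex_of_real K * tau)
    = (\<Sum>\<^sub>\<infinity>n. theta_sign R n * t n)"
    unfolding theta1_def theta2_def theta_sign_def t_def
    by (simp add: infsum_cmult_right'[symmetric] mult.assoc)
  let ?E = "exp (complex_of_real (2 * pi) * \<i> * complex_of_real J * z / complex_of_real L)"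
  let ?c = "complex_of_real (exp (pi * W * J\<^sup>2 / (L * K)))"
  have termwise: "?E * (theta_sign R n * t n) = ?c * (theta_sign R n * beam (J - K / 2 + K * n) z)" for n
  proof -
    have "?E * (theta_sign R n * t n) = theta_sign R n * (?E * t n)"
      by (simp only: mult.left_commute)
    also have "\<dots> = theta_sign R n * (?c * beam (J - K / 2 + K * n) z)"
      unfolding t_def by (simp only: exp_mult_theta_term[OF assms])
    finally show ?thesis
      by (simp only: mult.left_commute)
  qed
  show ?thesis
    unfolding \<open>(if R = B \<or> R = Bv then theta1 else theta2) _ _ = _\<close> theta_series_def
      infsum_cmult_right'[symmetric] by (intro infsum_cong termwise)
qed

lemma Mfun_eq_theta_series:
  assumes K: "calN R N = K" and tau: "tau = \<i> * complex_of_real (W / L)"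
  shows "Mfun R N L tau j z = complex_of_real (exp (pi * W * (Jfun R j)\<^sup>2 / (L * K)))
      * (theta_series (Jfun R j - K / 2) (theta_sign R) z
         + complex_of_real (reflection_sign R) * theta_series (- (Jfun R j - K / 2)) (theta_sign R) z)"
proof -
  let ?J = "Jfun R j"
  let ?th = "if R = B \<or> R = Bv then theta1 else theta2"
  let ?c = "complex_of_real (exp (pi * W * ?J\<^sup>2 / (L * K)))"
  have plus: "exp (complex_of_real (2 * pi) * \<i> * complex_of_real ?J * z / complex_of_real L) *
      ?th (complex_of_real ?J * tau + complex_of_real K * z / complex_of_real L) (complex_of_real K * tau)
    = ?c * theta_series (?J - K / 2) (theta_sign R) z"
    by (rule exp_mult_theta_eq_theta_series[OF tau])
  have "exp (complex_of_real (- 2 * pi) * \<i> * complex_of_real ?J * z / complex_of_real L) *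
      ?th (complex_of_real ?J * tau - complex_of_real K * z / complex_of_real L) (complex_of_real K * tau)
    = exp (complex_of_real (2 * pi) * \<i> * complex_of_real ?J * (- z) / complex_of_real L) *
      ?th (complex_of_real ?J * tau + complex_of_real K * (- z) / complex_of_real L) (complex_of_real K * tau)"
    by simp
  also have "\<dots> = ?c * theta_series (- (?J - K / 2)) (theta_sign R) z"
    unfolding exp_mult_theta_eq_theta_series[OF tau] theta_series_uminus theta_sign_uminus ..
  finally have minus: "exp (complex_of_real (- 2 * pi) * \<i> * complex_of_real ?J * z / complex_of_real L) *
      ?th (complex_of_real ?J * tau - complex_of_real K * z / complex_of_real L) (complex_of_real K * tau)
    = ?c * theta_series (- (?J - K / 2)) (theta_sign R) z" .
  show ?thesis
    unfolding Mfun_def Let_def K plus minus by (simp add: reflection_sign_def algebra_simps)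
qed

lemma has_iterated_integral_pairing_theta_sign_cross:
  assumes K: "calN R N = K" and "R \<noteq> A" and "R = D \<longrightarrow> 2 \<le> N" and "j \<in> {1..N}" and "k \<in> {1..N}"
  shows "has_iterated_integral
      (pairing_integrand (theta_series (Jfun R j - K / 2) (theta_sign R))
        (theta_series (- (Jfun R k - K / 2)) (theta_sign R)))
      (if j = k then of_real (cross_sign R N j * (L * gauss_mass)) else 0) {0..L} {0..W}"
proof -
  have "K \<in> \<int>"
    using calN_Ints K by metis
  have \<epsilon>: "norm (theta_sign R n) \<le> 1" for n
    by (simp add: norm_theta_sign)
  note shift = has_iterated_integral_pairing_theta_series_shift[where \<epsilon> = "theta_sign R" and \<eta> = "theta_sign R",
      OF \<open>K \<in> \<int>\<close> _ \<epsilon> \<epsilon>]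
  have difference: "(Jfun R j - K / 2) - (- (Jfun R k - K / 2)) = Jfun R j + Jfun R k - K"
    by simp
  from assms(2-5) show ?thesis
  proof (cases rule: Jfun_add_cases)
    case bottom
    have "cnj (theta_sign R n) * theta_sign R (n + - 1) = of_real (cross_sign R N j)" for n
      using bottom(3) cnj_theta_sign_mult_shift[of R n "- 1"] by auto
    moreover have "(Jfun R j - K / 2) - (- (Jfun R k - K / 2)) = K * of_int (- 1)"
      using bottom(1,2) by simp
    ultimately show ?thesis
      using shift bottom(1) by (simp only: simp_thms if_True of_real_mult)
  next
    case top
    have "cnj (theta_sign R n) * theta_sign R (n + 0) = of_real (cross_sign R N j)" for n
      using top(3) cnj_theta_sign_mult_shift[of R n 0] by simp
    moreover have "(Jfun R j - K / 2) - (- (Jfun R k - K / 2)) = K * of_int 0"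
      using top(1,2) unfolding K by simp
    ultimately show ?thesis
      using shift top(1) by (simp only: simp_thms if_True of_real_mult)
  next
    case interior
    have "Jfun R j + Jfun R k - K \<in> \<int>"
      using Jfun_add_Ints \<open>K \<in> \<int>\<close> by (rule Ints_diff)
    moreover have "0 < \<bar>Jfun R j + Jfun R k - K\<bar>" "\<bar>Jfun R j + Jfun R k - K\<bar> < K"
      using interior(1,2) unfolding K by simp_all
    then have "Jfun R j + Jfun R k - K \<noteq> K * of_int r" for r
      by (rule abs_less_imp_neq_mult_of_int)
    ultimately show ?thesis
      using has_iterated_integral_pairing_theta_series_disjoint[OF _ \<open>K \<in> \<int>\<close> \<epsilon> \<epsilon>] interior(3)
      unfolding difference by auto
  qed
qed

lemma has_iterated_integral_pairing_theta_sign_diag: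
  assumes K: "calN R N = K" and "R = D \<longrightarrow> 2 \<le> N" and "j \<in> {1..N}" and "k \<in> {1..N}"
  shows "has_iterated_integral
      (pairing_integrand (theta_series (Jfun R j - K / 2) (theta_sign R))
        (theta_series (Jfun R k - K / 2) (theta_sign R)))
      (if j = k then of_real (L * gauss_mass) else 0) {0..L} {0..W}"
    and "has_iterated_integral
      (pairing_integrand (theta_series (- (Jfun R j - K / 2)) (theta_sign R))
        (theta_series (- (Jfun R k - K / 2)) (theta_sign R)))
      (if j = k then of_real (L * gauss_mass) else 0) {0..L} {0..W}"
proof -
  define a where "a = Jfun R j - K / 2"
  define b where "b = Jfun R k - K / 2"
  have "K \<in> \<int>"
    using calN_Ints K by metis
  have "real N \<le> K"
    using calN_ge[of N R] assms by auto
  have "a - b = of_int (int j - int k)" and "- a - - b = of_int (int k - int j)"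
    unfolding a_def b_def using Jfun_diff[of R j k] by simp_all
  then have "a - b \<in> \<int>" and "- a - - b \<in> \<int>"
    by (simp_all only: Ints_of_int)
  have "\<bar>a - b\<bar> < K" "a = b \<longleftrightarrow> j = k" "\<bar>- a - - b\<bar> < K" "- a = - b \<longleftrightarrow> j = k"
    using \<open>a - b = of_int (int j - int k)\<close> assms(3,4) \<open>real N \<le> K\<close> by auto
  note self = has_iterated_integral_pairing_theta_series_self[where \<epsilon> = "theta_sign R",
      OF \<open>K \<in> \<int>\<close> _ _ norm_theta_sign]
  show "has_iterated_integral
      (pairing_integrand (theta_series a (theta_sign R)) (theta_series b (theta_sign R)))
      (if j = k then of_real (L * gauss_mass) else 0) {0..L} {0..W}"
    using self[OF \<open>a - b \<in> \<int>\<close> \<open>\<bar>a - b\<bar> < K\<close>]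
    unfolding \<open>a = b \<longleftrightarrow> j = k\<close> .
  show "has_iterated_integral
      (pairing_integrand (theta_series (- a) (theta_sign R)) (theta_series (- b) (theta_sign R)))
      (if j = k then of_real (L * gauss_mass) else 0) {0..L} {0..W}"
    using self[OF \<open>- a - - b \<in> \<int>\<close> \<open>\<bar>- a - - b\<bar> < K\<close>]
    unfolding \<open>- a = - b \<longleftrightarrow> j = k\<close> .
qed

lemma has_iterated_integral_pairing_theta_sign_opposite:
  assumes K: "calN R N = K"
  obtains v w where "has_iterated_integral
      (pairing_integrand (theta_series (Jfun R j - K / 2) (theta_sign R))
        (theta_series (- (Jfun R k - K / 2)) (theta_sign R))) v {0..L} {0..W}"
    and "has_iterated_integral
      (pairing_integrand (theta_series (- (Jfun R j - K / 2)) (theta_sign R))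
        (theta_series (Jfun R k - K / 2) (theta_sign R))) w {0..L} {0..W}"
proof -
  have KZ: "K \<in> \<int>"
    using calN_Ints K by metis
  have sum: "(Jfun R j - K / 2) - - (Jfun R k - K / 2) = Jfun R j + Jfun R k - K"
    "- (Jfun R j - K / 2) - (Jfun R k - K / 2) = - (Jfun R j + Jfun R k - K)"
    by simp_all
  have "Jfun R j + Jfun R k - K \<in> \<int>"
    using Jfun_add_Ints KZ by (rule Ints_diff)
  then have Z1: "(Jfun R j - K / 2) - - (Jfun R k - K / 2) \<in> \<int>"
    and Z2: "- (Jfun R j - K / 2) - (Jfun R k - K / 2) \<in> \<int>"
    unfolding sum by (simp_all only: Ints_minus)
  have \<epsilon>: "norm (theta_sign R n) \<le> 1" for n
    by (simp add: norm_theta_sign)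
  show ?thesis
    by (rule that[OF has_iterated_integral_pairing_theta_series[OF Z1 KZ \<epsilon> \<epsilon>]
          has_iterated_integral_pairing_theta_series[OF Z2 KZ \<epsilon> \<epsilon>]])
qed

lemma has_iterated_integral_pairing_Mfun:
  assumes K: "calN R N = K" and tau: "tau = \<i> * complex_of_real (W / L)"
    and "R = D \<longrightarrow> 2 \<le> N" and j: "j \<in> {1..N}" and k: "k \<in> {1..N}"
  shows "has_iterated_integral (pairing_integrand (Mfun R N L tau j) (Mfun R N L tau k))
    (if j = k then hconst R N L W tau j else 0) {0..L} {0..W}"
proof -
  define \<kappa> where "\<kappa> i = complex_of_real (exp (pi * W * (Jfun R i)\<^sup>2 / (L * K)))" for i
  define s where "s = complex_of_real (reflection_sign R)"
  define c where "c = complex_of_real (L * gauss_mass)"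
  define \<beta> where "\<beta> = (if j = k then of_real (cross_sign R N j * (L * gauss_mass)) else (0::complex))"
  have M: "Mfun R N L tau i = (\<lambda>z. \<kappa> i * (theta_series (Jfun R i - K / 2) (theta_sign R) z
      + s * theta_series (- (Jfun R i - K / 2)) (theta_sign R) z))" for i
    unfolding \<kappa>_def s_def by (rule ext) (rule Mfun_eq_theta_series[OF K tau])
  note diag = has_iterated_integral_pairing_theta_sign_diag[OF K assms(3) j k, folded c_def]
  obtain v w where plus_minus: "has_iterated_integral
      (pairing_integrand (theta_series (Jfun R j - K / 2) (theta_sign R))
        (theta_series (- (Jfun R k - K / 2)) (theta_sign R))) v {0..L} {0..W}"
    and minus_plus: "has_iterated_integral
      (pairing_integrand (theta_series (- (Jfun R j - K / 2)) (theta_sign R))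
        (theta_series (Jfun R k - K / 2) (theta_sign R))) w {0..L} {0..W}"
    using has_iterated_integral_pairing_theta_sign_opposite[OF K] .
  (* In type A there is no reflected term (s = 0), so v and w need not be evaluated there. *)
  have cross: "s * v = s * \<beta> \<and> s * w = s * \<beta>"
  proof (cases "R = A")
    case False
    have "cnj (if k = j then of_real (cross_sign R N k * (L * gauss_mass)) else 0) = \<beta>"
      by (simp add: \<beta>_def)
    from has_iterated_integral_pairing_swap[OF
        has_iterated_integral_pairing_theta_sign_cross[OF K False assms(3) k j], unfolded this]
    show ?thesis
      using has_iterated_integral_unique[OF minus_plus]
        has_iterated_integral_unique[OF plus_minus
          has_iterated_integral_pairing_theta_sign_cross[OF K False assms(3) j k, folded \<beta>_def]]
      by simp
  qed (simp add: s_def reflection_sign_def)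
  have "has_iterated_integral (pairing_integrand (Mfun R N L tau j) (Mfun R N L tau k))
      (cnj (\<kappa> j) * \<kappa> k * ((if j = k then c else 0) + s * v + cnj s * w + cnj s * s * (if j = k then c else 0)))
      {0..L} {0..W}"
    unfolding M by (rule has_iterated_integral_pairing_combination[OF diag(1) plus_minus minus_plus diag(2)])
  moreover have "cnj s = s"
    by (simp add: s_def)
  ultimately show ?thesis
    using cross hconst_eq[OF L_pos W_pos K K_pos tau, of j]
    by (auto simp: s_def c_def \<beta>_def \<kappa>_def gauss_mass_def power2_eq_square algebra_simps)
qed

end

theorem proposition2p4:
  fixes L W :: real and R :: rootsys and N j k :: nat and tau :: complex
  assumes "0 < L" and "0 < W"
    and "tau = \<i> * complex_of_real (W / L)"
    and "R = D \<longrightarrow> 2 \<le> N"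
    and "j \<in> {1..N}" and "k \<in> {1..N}"
  shows "integral {0..L} (\<lambda>x. integral {0..W} (\<lambda>y.
            complex_of_real (exp (- 2 * pi * calN R N / (L * W) * y^2))
            * cnj (Mfun R N L tau j (Complex x y)) * Mfun R N L tau k (Complex x y)))
         = (if j = k then hconst R N L W tau j else 0)"
proof -
  have "real N \<le> calN R N" and "1 \<le> N"
    using calN_ge[of N R] assms(4-5) by auto
  then interpret gaussian_strip L W "calN R N"
    using assms(1,2) by unfold_locales auto
  have "has_iterated_integral (pairing_integrand (Mfun R N L tau j) (Mfun R N L tau k))
      (if j = k then hconst R N L W tau j else 0) {0..L} {0..W}"
    using assms(3-6) by (rule has_iterated_integral_pairing_Mfun[OF refl])
  then show ?thesis
    unfolding pairing_integrand_def weight_def by (rule has_iterated_integral_integral)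
qed

end
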